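(* Consider the mergesort that recursively splits the input sequence into two contiguous parts, sorts each, and merges them with the following merge algorithm: set $T=\emptyset$; repeat: if $T_1$ is empty return $\mathrm{join}(T,T_2)$; else if $T_2$ is empty return $\mathrm{join}(T,T_1)$; else with $k_1=\min(T_1)$, $k_2=\min(T_2)$, if $k_1>k_2$ let $(t,T_2)=\mathrm{split}(T_2,k_1)$, else let $(t,T_1)=\mathrm{split}(T_1,k_2)$, and set $T=\mathrm{join}(T,t)$. Then this mergesort sorts a sequence $\pi$ in time $O(\mathrm{LIB}(\pi))$.
   Context: Trees are heterogeneous finger search trees: $\mathrm{split}(T,k)$ returns the trees of keys of $T$ less than and greater than $k$; $\mathrm{join}$ of two trees whose key ranges do not interleave returns a BST on their union; both run in amortized time $O(\lg(\min(|T_1|,|T_2|)+1))$ where $T_1,T_2$ are the two smaller trees. Keys are distinct. $\mathrm{LIB}(\pi)$ is computed with respect to the static binary tree $P$ given by the recursion of the mergesort, whose leaves are the keys of $\pi$ in the order of $\pi$: for each internal vertex $v$, list the leaves below $v$ in sorted key order, labeling each L or R by the subtree of $v$ containing it; with $S(v)$ the decomposition into the minimum number of runs of equal labels, $\mathrm{LIB}(v)=\sum_{r\in S(v)}\lg(|r|+1)$ and $\mathrm{LIB}(\pi)=\sum_v\mathrm{LIB}(v)$. *)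

theory Defs
  imports Complex_Main
begin

text \<open>Model of the heterogeneous finger search trees: a tree is represented by the
  sorted list of its keys. Operations and their (amortized) cost bounds.\<close>

definition tsplit :: "'a::linorder list \<Rightarrow> 'a \<Rightarrow> 'a list \<times> 'a list" where
  "tsplit T k = (filter (\<lambda>x. x < k) T, filter (\<lambda>x. k < x) T)"

definition tjoin :: "'a list \<Rightarrow> 'a list \<Rightarrow> 'a list" where
  "tjoin A B = A @ B"

text \<open>Cost of split/join: lg(min(|T1|,|T2|)+1), T1,T2 the two smaller trees.\<close>
definition opcost :: "'a list \<Rightarrow> 'b list \<Rightarrow> real" where
  "opcost A B = log 2 (real (min (length A) (length B)) + 1)"

text \<open>Each loop iteration and each return is charged one unit of constant overhead
  (emptiness tests, minima, comparison) plus the cost bounds of split and join.\<close>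
function mrg :: "'a::linorder list \<Rightarrow> 'a list \<Rightarrow> 'a list \<Rightarrow> 'a list \<times> real" where
  "mrg T T1 T2 =
    (if T1 = [] then (tjoin T T2, 1 + opcost T T2)
     else if T2 = [] then (tjoin T T1, 1 + opcost T T1)
     else (let k1 = hd T1; k2 = hd T2 in
       if k1 > k2 then
         (let (t, T2') = tsplit T2 k1;
              (R, c) = mrg (tjoin T t) T1 T2'
          in (R, 1 + opcost t T2' + opcost T t + c))
       else
         (let (t, T1') = tsplit T1 k2;
              (R, c) = mrg (tjoin T t) T1' T2
          in (R, 1 + opcost t T1' + opcost T t + c))))"
  by pat_completeness auto
termination
proof (relation "measure (\<lambda>(T, T1, T2). length T1 + length T2)")
  show "wf (measure (\<lambda>(T, T1, T2). length T1 + length T2))" by simp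
next
  fix T T1 T2 :: "'a list" and k1 k2 x t T2'
  assume "T1 \<noteq> []" "T2 \<noteq> []" "k1 = hd T1" "k2 = hd T2" "k2 < k1"
    "x = tsplit T2 k1" "(t, T2') = x"
  then have "T2' = filter (\<lambda>x. k1 < x) T2" by (simp add: tsplit_def)
  moreover have "length (filter (\<lambda>x. k1 < x) T2) < length T2"
    using \<open>T2 \<noteq> []\<close> \<open>k2 = hd T2\<close> \<open>k2 < k1\<close>
    by (intro length_filter_less[of k2]) auto
  ultimately show "((tjoin T t, T1, T2'), T, T1, T2)
      \<in> measure (\<lambda>(T, T1, T2). length T1 + length T2)" by simp
next
  fix T T1 T2 :: "'a list" and k1 k2 x t T1'
  assume "T1 \<noteq> []" "T2 \<noteq> []" "k1 = hd T1" "k2 = hd T2" "\<not> k2 < k1"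
    "x = tsplit T1 k2" "(t, T1') = x"
  then have "T1' = filter (\<lambda>x. k2 < x) T1" by (simp add: tsplit_def)
  moreover have "length (filter (\<lambda>x. k2 < x) T1) < length T1"
    using \<open>T1 \<noteq> []\<close> \<open>k1 = hd T1\<close> \<open>\<not> k2 < k1\<close>
    by (intro length_filter_less[of k1]) auto
  ultimately show "((tjoin T t, T1', T2), T, T1, T2)
      \<in> measure (\<lambda>(T, T1, T2). length T1 + length T2)" by simp
qed

function msort :: "'a::linorder list \<Rightarrow> 'a list \<times> real" where
  "msort xs =
    (if length xs \<le> 1 then (xs, 1)
     else (let h = length xs div 2;
               (A, ca) = msort (take h xs);
               (B, cb) = msort (drop h xs);
               (M, cm) = mrg [] A B
           in (M, 1 + ca + cb + cm)))"
  by pat_completeness auto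
termination
  by (relation "measure length") auto

function runs :: "bool list \<Rightarrow> nat list" where
  "runs [] = []"
| "runs (b # bs) = (length (takeWhile (\<lambda>c. c = b) bs) + 1) # runs (dropWhile (\<lambda>c. c = b) bs)"
  by pat_completeness auto
termination
  by (relation "measure length") (auto simp: le_imp_less_Suc length_dropWhile_le)

text \<open>LIB of an internal vertex whose left subtree has leaves L and right subtree leaves R:
  label the leaves in sorted key order by L (True) / R (False).\<close>
definition LIB_vertex :: "'a::linorder list \<Rightarrow> 'a list \<Rightarrow> real" where
  "LIB_vertex L R =
     sum_list (map (\<lambda>r. log 2 (real r + 1)) (runs (map (\<lambda>x. x \<in> set L) (sort (L @ R)))))"

function LIB :: "'a::linorder list \<Rightarrow> real" where
  "LIB xs =
    (if length xs \<le> 1 then 0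
     else (let h = length xs div 2
           in LIB (take h xs) + LIB (drop h xs) + LIB_vertex (take h xs) (drop h xs)))"
  by pat_completeness auto
termination
  by (relation "measure length") auto

end

(*
  Each round of the merge loop moves a maximal block t of keys of one input, all smaller
  than the least remaining key of the other input, to the output. In the label sequence of
  the current vertex of the recursion tree such a block is exactly one run, of length
  |t| >= 1. The split and the join of that round each cost at most lg(|t| + 1), and so does
  the unit overhead, hence the merge at a vertex v costs at most 1 + 3 LIB(v). By induction
  over the recursion tree mergesort costs at most 1 + 6 LIB(pi): the three units spent at an
  internal vertex beyond its merge rounds are paid by LIB(v) >= 1.
*)

theory Submission
  imports Defs "HOL-Library.Multiset"
begin

lemma runs_replicate_append:
  assumes "m > 0" and "cs = [] \<or> hd cs \<noteq> b"
  shows "runs (replicate m b @ cs) = m # runs cs"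
proof -
  obtain k where "m = Suc k" using \<open>m > 0\<close> by (cases m) auto
  moreover have "takeWhile (\<lambda>c. c = b) (replicate k b @ cs) = replicate k b"
    and "dropWhile (\<lambda>c. c = b) (replicate k b @ cs) = cs"
    using assms(2) by (cases cs; simp add: takeWhile_append dropWhile_append)+
  ultimately show ?thesis by simp
qed

lemma runs_replicate: "runs (replicate m b) = (if m = 0 then [] else [m])"
  using runs_replicate_append[of m "[]" b] by simp

lemma runs_map_Not: "runs (map Not bs) = runs bs"
  by (induction bs rule: runs.induct) (simp_all add: takeWhile_map dropWhile_map comp_def)

lemma sort_append_commute: "sort (xs @ ys) = sort (ys @ xs)"
  by (rule properties_for_sort) (simp_all add: add.commute)

lemma sort_append_sort: "sort (sort xs @ sort ys) = sort (xs @ ys)"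
  by (rule properties_for_sort) simp_all

lemma hd_sorted_eq_least:
  assumes "sorted xs" "x \<in> set xs" "\<forall>y\<in>set xs. x \<le> y"
  shows "hd xs = x"
  using assms by (cases xs) (auto intro: order.antisym)

lemma sort_append_split_below_bound:
  assumes "\<forall>y\<in>set xs. x \<le> y" and "x \<notin> set ys"
  shows "sort (xs @ ys) = sort (filter (\<lambda>y. y < x) ys) @ sort (xs @ filter (\<lambda>y. x < y) ys)"
proof -
  have "mset ys = mset (filter (\<lambda>y. y < x) ys) + mset (filter (\<lambda>y. x < y) ys)"
    using \<open>x \<notin> set ys\<close> by (induction ys) auto
  then have "sort (xs @ ys) = sort (filter (\<lambda>y. y < x) ys @ xs @ filter (\<lambda>y. x < y) ys)"
    by (intro sort_key_eq_sort_key) (simp_all add: ac_simps)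
  also have "\<dots> = sort (filter (\<lambda>y. y < x) ys) @ sort (xs @ filter (\<lambda>y. x < y) ys)"
    using assms(1) by (intro sort_append) force
  finally show ?thesis .
qed

lemma LIB_vertex_nonneg: "0 \<le> LIB_vertex L R"
  unfolding LIB_vertex_def by (intro sum_list_nonneg) auto

lemma LIB_vertex_Nil_right: "LIB_vertex L [] = log 2 (real (length L) + 1)"
proof -
  have "map (\<lambda>x. x \<in> set L) (sort L) = map (\<lambda>_. True) (sort L)"
    by (rule map_cong) auto
  then have "map (\<lambda>x. x \<in> set L) (sort L) = replicate (length L) True"
    by (simp add: map_replicate_const)
  then show ?thesis by (simp add: LIB_vertex_def runs_replicate)
qed

lemma LIB_vertex_commute:
  assumes "set L \<inter> set R = {}"
  shows "LIB_vertex R L = LIB_vertex L R"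
proof -
  have labels: "map (\<lambda>x. x \<in> set R) (sort (L @ R))
      = map Not (map (\<lambda>x. x \<in> set L) (sort (L @ R)))"
    using assms by (auto simp: map_idI)
  show ?thesis
    unfolding LIB_vertex_def sort_append_commute[of R] labels runs_map_Not ..
qed

lemma LIB_vertex_Nil_left: "LIB_vertex [] R = log 2 (real (length R) + 1)"
  using LIB_vertex_commute[of R "[]"] by (simp add: LIB_vertex_Nil_right)

lemma LIB_vertex_sort: "LIB_vertex (sort L) (sort R) = LIB_vertex L R"
  by (simp add: LIB_vertex_def sort_append_sort)

lemma LIB_vertex_ge_1:
  assumes "L @ R \<noteq> []"
  shows "1 \<le> LIB_vertex L R"
proof -
  obtain b bs where labels: "map (\<lambda>x. x \<in> set L) (sort (L @ R)) = b # bs"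
  proof -
    have "sort (L @ R) \<noteq> []"
      using assms by (metis length_0_conv length_sort)
    then show thesis
      using that by (cases "sort (L @ R)") simp_all
  qed
  let ?first = "length (takeWhile (\<lambda>c. c = b) bs) + 1"
  and ?rest = "runs (dropWhile (\<lambda>c. c = b) bs)"
  have "LIB_vertex L R = log 2 (real ?first + 1) + (\<Sum>r\<leftarrow>?rest. log 2 (real r + 1))"
    by (simp add: LIB_vertex_def labels)
  moreover have "1 \<le> log 2 (real ?first + 1)"
    by simp
  moreover have "0 \<le> (\<Sum>r\<leftarrow>?rest. log 2 (real r + 1))"
    by (intro sum_list_nonneg) auto
  ultimately show ?thesis by linarith
qed

lemma LIB_vertex_split_below_min:
  assumes "x \<in> set L" and "\<forall>y\<in>set L. x \<le> y" and "x \<notin> set R"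
  shows "LIB_vertex L R = log 2 (real (length (filter (\<lambda>y. y < x) R)) + 1)
    + LIB_vertex L (filter (\<lambda>y. x < y) R)"
proof -
  define below where "below = filter (\<lambda>y. y < x) R"
  define above where "above = filter (\<lambda>y. x < y) R"
  have "map (\<lambda>y. y \<in> set L) (sort below) = map (\<lambda>_. False) (sort below)"
    using assms(2) by (intro map_cong) (auto simp: below_def)
  then have "map (\<lambda>y. y \<in> set L) (sort below) = replicate (length below) False"
    by (simp add: map_replicate_const)
  moreover obtain rest where "sort (L @ above) = x # rest"
  proof -
    have "x \<in> set (sort (L @ above))"
      using assms(1) by simp
    moreover have "hd (sort (L @ above)) = x"
      using assms(1,2) by (auto simp: above_def intro!: hd_sorted_eq_least)
    ultimately have "sort (L @ above) = x # tl (sort (L @ above))"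
      by (cases "sort (L @ above)") auto
    then show thesis by (rule that)
  qed
  ultimately have "LIB_vertex L R = (\<Sum>r\<leftarrow>runs (replicate (length below) False
      @ True # map (\<lambda>y. y \<in> set L) rest). log 2 (real r + 1))"
    using sort_append_split_below_bound[OF assms(2,3)] assms(1)
    by (simp add: LIB_vertex_def below_def above_def)
  also have "\<dots> = log 2 (real (length below) + 1) + LIB_vertex L above"
    using \<open>sort (L @ above) = x # rest\<close> assms(1)
    by (cases "below = []") (simp_all add: LIB_vertex_def runs_replicate_append)
  finally show ?thesis by (simp add: below_def above_def)
qed

lemma opcost_le_left: "opcost A B \<le> log 2 (real (length A) + 1)"
  by (simp add: opcost_def)

lemma opcost_le_right: "opcost A B \<le> log 2 (real (length B) + 1)"
  by (simp add: opcost_def)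

declare mrg.simps [simp del]

lemma mrg_Nil_left [simp]: "mrg T [] T2 = (T @ T2, 1 + opcost T T2)"
  by (subst mrg.simps) (simp add: tjoin_def)

lemma mrg_Nil_right [simp]: "mrg T T1 [] = (T @ T1, 1 + opcost T T1)"
  by (subst mrg.simps) (simp add: tjoin_def)

lemma mrg_split_right:
  assumes "T1 \<noteq> []" and "T2 \<noteq> []" and "hd T2 < hd T1"
  defines "t \<equiv> filter (\<lambda>x. x < hd T1) T2" and "T2' \<equiv> filter (\<lambda>x. hd T1 < x) T2"
  shows "mrg T T1 T2 = (fst (mrg (T @ t) T1 T2'),
    1 + opcost t T2' + opcost T t + snd (mrg (T @ t) T1 T2'))"
  using assms by (subst mrg.simps[of T]) (simp add: tsplit_def tjoin_def Let_def case_prod_beta)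

lemma mrg_split_left:
  assumes "T1 \<noteq> []" and "T2 \<noteq> []" and "hd T1 < hd T2"
  defines "t \<equiv> filter (\<lambda>x. x < hd T2) T1" and "T1' \<equiv> filter (\<lambda>x. hd T2 < x) T1"
  shows "mrg T T1 T2 = (fst (mrg (T @ t) T1' T2),
    1 + opcost t T1' + opcost T t + snd (mrg (T @ t) T1' T2))"
  using assms less_imp_not_less[OF assms(3)]
  by (subst mrg.simps[of T]) (simp add: tsplit_def tjoin_def Let_def case_prod_beta)

lemma mrg_round:
  assumes "sorted A" and "sorted B" and "set A \<inter> set B = {}"
    and "A \<noteq> []" and "B \<noteq> []" and "hd B < hd A"
  defines "t \<equiv> filter (\<lambda>x. x < hd A) B" and "B' \<equiv> filter (\<lambda>x. hd A < x) B"
  shows mrg_round_sort: "sort (A @ B) = t @ sort (A @ B')"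
    and mrg_round_cost:
      "c \<le> 1 + 3 * LIB_vertex A B' \<Longrightarrow>
        1 + opcost t B' + opcost T t + c \<le> 1 + 3 * LIB_vertex A B"
proof -
  have min: "\<forall>y\<in>set A. hd A \<le> y"
    using \<open>sorted A\<close> \<open>A \<noteq> []\<close> by (cases A) auto
  have "hd A \<in> set A" and "hd A \<notin> set B"
    using hd_in_set[OF \<open>A \<noteq> []\<close>] \<open>set A \<inter> set B = {}\<close> by auto
  show "sort (A @ B) = t @ sort (A @ B')"
    using sort_append_split_below_bound[OF min \<open>hd A \<notin> set B\<close>] \<open>sorted B\<close>
    by (simp add: t_def B'_def sorted_wrt_filter sorted_sort_id)
  assume c: "c \<le> 1 + 3 * LIB_vertex A B'"
  have "t \<noteq> []"
    using assms(5,6) by (auto simp: t_def filter_empty_conv)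
  then have "1 \<le> log 2 (real (length t) + 1)"
    by (cases t) simp_all
  moreover have "LIB_vertex A B = log 2 (real (length t) + 1) + LIB_vertex A B'"
    using LIB_vertex_split_below_min[OF \<open>hd A \<in> set A\<close> min \<open>hd A \<notin> set B\<close>]
    by (simp add: t_def B'_def)
  ultimately show "1 + opcost t B' + opcost T t + c \<le> 1 + 3 * LIB_vertex A B"
    using c opcost_le_left[of t B'] opcost_le_right[of T t] by linarith
qed

lemma mrg_Nil_result_and_cost:
  assumes "T1 = [] \<or> T2 = []" and "sorted T1" and "sorted T2"
  shows "fst (mrg T T1 T2) = T @ sort (T1 @ T2) \<and> snd (mrg T T1 T2) \<le> 1 + 3 * LIB_vertex T1 T2"
proof -
  have "mrg T T1 T2 = (T @ T1 @ T2, 1 + opcost T (T1 @ T2))"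
    using assms(1) by auto
  moreover have "opcost T (T1 @ T2) \<le> LIB_vertex T1 T2"
    using assms(1) opcost_le_right[of T "T1 @ T2"]
    by (auto simp: LIB_vertex_Nil_left LIB_vertex_Nil_right)
  moreover have "sort (T1 @ T2) = T1 @ T2"
    using assms by (auto simp: sorted_sort_id)
  ultimately show ?thesis
    using LIB_vertex_nonneg[of T1 T2] by simp
qed

lemma mrg_result_and_cost:
  assumes "sorted T1" and "sorted T2" and "set T1 \<inter> set T2 = {}"
  shows "fst (mrg T T1 T2) = T @ sort (T1 @ T2) \<and> snd (mrg T T1 T2) \<le> 1 + 3 * LIB_vertex T1 T2"
  using assms
proof (induction "length T1 + length T2" arbitrary: T T1 T2 rule: less_induct)
  case less
  have "hd T1 \<noteq> hd T2" if "T1 \<noteq> []" "T2 \<noteq> []"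
    using that less.prems(3) by (metis disjoint_iff hd_in_set)
  then consider "T1 = [] \<or> T2 = []" | "T1 \<noteq> []" "T2 \<noteq> []" "hd T2 < hd T1"
    | "T1 \<noteq> []" "T2 \<noteq> []" "hd T1 < hd T2"
    by (metis linorder_neqE)
  then show ?case
  proof cases
    case 1
    then show ?thesis
      using mrg_Nil_result_and_cost less.prems(1,2) by blast
  next
    case 2
    define t where "t = filter (\<lambda>x. x < hd T1) T2"
    define T2' where "T2' = filter (\<lambda>x. hd T1 < x) T2"
    have "length T2' < length T2"
      using 2 by (auto simp: T2'_def intro!: length_filter_less[of "hd T2"])
    then have IH: "fst (mrg (T @ t) T1 T2') = (T @ t) @ sort (T1 @ T2')
        \<and> snd (mrg (T @ t) T1 T2') \<le> 1 + 3 * LIB_vertex T1 T2'"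
      using less by (intro less.hyps) (auto simp: T2'_def sorted_wrt_filter)
    show ?thesis
      using mrg_split_right[OF 2, of T] IH mrg_round_sort[OF less.prems 2]
        mrg_round_cost[OF less.prems 2, of "snd (mrg (T @ t) T1 T2')" T]
      by (simp add: t_def T2'_def)
  next
    case 3
    define t where "t = filter (\<lambda>x. x < hd T2) T1"
    define T1' where "T1' = filter (\<lambda>x. hd T2 < x) T1"
    have "length T1' < length T1"
      using 3 by (auto simp: T1'_def intro!: length_filter_less[of "hd T1"])
    then have IH: "fst (mrg (T @ t) T1' T2) = (T @ t) @ sort (T1' @ T2)
        \<and> snd (mrg (T @ t) T1' T2) \<le> 1 + 3 * LIB_vertex T1' T2"
      using less by (intro less.hyps) (auto simp: T1'_def sorted_wrt_filter)
    have "set T1' \<inter> set T2 = {}" and swapped: "set T2 \<inter> set T1 = {}"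
      using less.prems(3) by (auto simp: T1'_def)
    show ?thesis
      using mrg_split_left[OF 3, of T] IH sort_append_commute[of T1] sort_append_commute[of T1']
        LIB_vertex_commute[OF less.prems(3)] LIB_vertex_commute[OF \<open>set T1' \<inter> set T2 = {}\<close>]
        mrg_round_sort[OF less.prems(2,1) swapped 3(2,1,3)]
        mrg_round_cost[OF less.prems(2,1) swapped 3(2,1,3), of "snd (mrg (T @ t) T1' T2)" T]
      by (simp add: t_def T1'_def)
  qed
qed

declare msort.simps [simp del] LIB.simps [simp del]

lemma msort_result_and_cost:
  assumes "distinct xs"
  shows "fst (msort xs) = sort xs \<and> snd (msort xs) \<le> 1 + 6 * LIB xs"
  using assms
proof (induction "length xs" arbitrary: xs rule: less_induct)
  case less
  show ?case
  proof (cases "length xs \<le> 1")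
    case True
    then have "sort xs = xs"
      by (cases xs) auto
    with True show ?thesis
      by (simp add: msort.simps LIB.simps)
  next
    case False
    define A where "A = take (length xs div 2) xs"
    define B where "B = drop (length xs div 2) xs"
    have "xs = A @ B"
      by (simp add: A_def B_def)
    with \<open>distinct xs\<close> have "distinct A" "distinct B" "set A \<inter> set B = {}"
      by simp_all
    moreover have "length A < length xs" "length B < length xs"
      using False by (simp_all add: A_def B_def)
    ultimately have IH: "fst (msort A) = sort A \<and> snd (msort A) \<le> 1 + 6 * LIB A"
        "fst (msort B) = sort B \<and> snd (msort B) \<le> 1 + 6 * LIB B"
      using less.hyps by blast+
    have merge: "fst (mrg [] (sort A) (sort B)) = sort xs
        \<and> snd (mrg [] (sort A) (sort B)) \<le> 1 + 3 * LIB_vertex A B"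
      using mrg_result_and_cost[of "sort A" "sort B" "[]"] \<open>set A \<inter> set B = {}\<close> \<open>xs = A @ B\<close>
      by (simp add: LIB_vertex_sort sort_append_sort)
    have "1 \<le> LIB_vertex A B"
      using False \<open>xs = A @ B\<close> by (intro LIB_vertex_ge_1) auto
    moreover have "msort xs = (fst (mrg [] (sort A) (sort B)),
        1 + snd (msort A) + snd (msort B) + snd (mrg [] (sort A) (sort B)))"
      using False IH by (subst msort.simps) (simp add: Let_def case_prod_beta A_def B_def)
    moreover have "LIB xs = LIB A + LIB B + LIB_vertex A B"
      using False by (subst LIB.simps) (simp add: Let_def A_def B_def)
    ultimately show ?thesis
      using IH merge by simp
  qed
qed

theorem lemma7:
  "\<exists>c::real. \<forall>\<pi>::'a::linorder list. distinct \<pi> \<longrightarrow>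
      fst (msort \<pi>) = sort \<pi> \<and> snd (msort \<pi>) \<le> c * (1 + LIB \<pi>)"
  using msort_result_and_cost by (intro exI[of _ 6]) fastforce

end
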